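(* Let $g$ be a symplectic potential, $\psi\in C^\infty(P)$ strongly convex with $g_s:=g+s\psi$ a symplectic potential for all $s>0$, and for $s\ge0$ let $\mathcal H_{g_s}=\operatorname{span}_{\mathbb C}\{\sigma^m_s:m\in P\cap\mathbb Z^n\}$ where $\sigma^m_s=w_s^me^{-h_s}\mathbbm 1\otimes\sqrt{dZ_s}$. Let $\hat\psi=i\nabla_{X_\psi}+\psi$ be the prequantum operator of $\psi$, which on sections $f\mathbbm 1$ over $\check X_P$ acts as $\hat\psi(f\mathbbm1)=(iX_\psi f-x\cdot\frac{\partial\psi}{\partial x}f+\psi f)\mathbbm 1$, with $X_\psi=-\sum_j\frac{\partial\psi}{\partial x^j}\partial_{\theta_j}$, and let $e^{s\hat\psi}:=\sum_k\frac{s^k}{k!}\hat\psi^k$. Let $e^{is\mathcal L_{X_\psi}}$ act on the half-form factor by $e^{is\mathcal L_{X_\psi}}\sqrt{dZ}:=\sqrt{dZ_s}$. Then for every $s>0$ the operator $e^{s\hat\psi}\otimes e^{is\mathcal L_{X_\psi}}:\mathcal H_{g}\to\mathcal H_{g_s}$ is an isomorphism, and $e^{s\hat\psi}\otimes e^{is\mathcal L_{X_\psi}}\,\sigma^m_0=\sigma^m_s$ for every $m\in P\cap\mathbb Z^n$.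
   Context: Let $P=\{x\in\mathbb R^n:\ell_j(x)=\langle\nu_j,x\rangle+\lambda_j\ge0,\ j=1,\dots,r\}$ be a Delzant polytope with primitive inward normals $\nu_j$, with $\lambda_j\in\frac12+\mathbb Z$ (so $P\cap\mathbb Z^n$ lies in the interior $\check P$), and $(X_P,\omega)$ the associated compact symplectic toric manifold with moment map $\mu$, toric divisors $D_j$, and action-angle coordinates $(x,\theta)$ on $\check X_P=\mu^{-1}(\check P)$ with $\omega=\sum dx^j\wedge d\theta_j$; $\iota_{X_f}\omega=df$. A symplectic potential is $g=\frac12\sum\ell_j\log\ell_j+\varphi$, $\varphi\in C^\infty(P)$, with positive definite Hessian on $\check P$ and $\det H_g=(\alpha\prod\ell_j)^{-1}$, $\alpha>0$ smooth on $P$; it gives a toric Kähler structure $I_g$. For the potential $g_s$ write $y^j_s=\partial g_s/\partial x^j$, $z_j(s)=y^j_s+i\theta_j$, $w_s^m=e^{m\cdot(y_s+i\theta)}$, $h_s=x\cdot y_s-g_s$, and $dZ_s=dz_1(s)\wedge\cdots\wedge dz_n(s)$ (the $I_{g_s}$-meromorphic section of $K_{X_P}$ with divisor $-(D_1+\dots+D_r)$); $dZ:=dZ_0$. $L$ is the half-form corrected prequantum line bundle: a Hermitian line bundle with $c_1(L)=[\omega/2\pi]-c_1(X_P)/2$ and connection of curvature $-i(\omega-\frac12\rho)$, $\rho$ the Ricci form; over $\check X_P$ it has a unitary trivialization written $\mathbbm1\otimes\sqrt{dZ_s}$ (product of a unitary section $\mathbbm 1$ of a prequantum factor with $\nabla\mathbbm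 1=-i\sum_jx^jd\theta_j\,\mathbbm 1$, and a multivalued square root $\sqrt{dZ_s}$ of $dZ_s$). The sections $\sigma^m_s$, $m\in P\cap\mathbb Z^n$, are the $I_{g_s}$-holomorphic monomial sections of $L$ and form a basis of the Kähler quantization $\mathcal H_{g_s}=H^0(X_P,L)$. *)

theory Defs
  imports "HOL-Analysis.Analysis"
begin

text \<open>Coordinates: x \<in> R^n (action), theta \<in> R^n (angle, 2pi-periodic).
  The polytope is given by data r, nu_j (integer vectors), lambda_j (reals), j < r.\<close>

definition rv :: "int^'n \<Rightarrow> real^'n" where
  "rv m = (\<chi> i. real_of_int (m $ i))"

definition ell :: "(nat \<Rightarrow> int^'n) \<Rightarrow> (nat \<Rightarrow> real) \<Rightarrow> nat \<Rightarrow> real^'n \<Rightarrow> real" where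
  "ell nu lam j x = rv (nu j) \<bullet> x + lam j"

definition polytope :: "nat \<Rightarrow> (nat \<Rightarrow> int^'n) \<Rightarrow> (nat \<Rightarrow> real) \<Rightarrow> (real^'n) set" where
  "polytope r nu lam = {x. \<forall>j<r. ell nu lam j x \<ge> 0}"

definition primitive :: "int^'n \<Rightarrow> bool" where
  "primitive v \<longleftrightarrow> (\<forall>d::int. (\<forall>i. d dvd v $ i) \<longrightarrow> \<bar>d\<bar> = 1)"

definition active :: "nat \<Rightarrow> (nat \<Rightarrow> int^'n) \<Rightarrow> (nat \<Rightarrow> real) \<Rightarrow> real^'n \<Rightarrow> nat set" where
  "active r nu lam x = {j. j < r \<and> ell nu lam j x = 0}"

definition delzant :: "nat \<Rightarrow> (nat \<Rightarrow> int^'n) \<Rightarrow> (nat \<Rightarrow> real) \<Rightarrow> bool" where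
  "delzant r nu lam \<longleftrightarrow>
     bounded (polytope r nu lam) \<and> interior (polytope r nu lam) \<noteq> {} \<and>
     (\<forall>j<r. primitive (nu j)) \<and>
     (\<forall>j<r. \<exists>k::int. lam j = real_of_int k + 1/2) \<and>
     (\<forall>j<r. \<exists>x\<in>polytope r nu lam. ell nu lam j x = 0 \<and>
              (\<forall>k<r. k \<noteq> j \<longrightarrow> ell nu lam k x > 0)) \<and>
     (\<forall>v. v extreme_point_of (polytope r nu lam) \<longrightarrow>
          card (active r nu lam v) = CARD('n) \<and>
          (\<forall>z::int^'n. \<exists>c::nat \<Rightarrow> int. z = (\<Sum>j\<in>active r nu lam v. c j *s nu j)))"

definition pdx :: "'n::finite \<Rightarrow> (real^'n \<Rightarrow> real) \<Rightarrow> real^'n \<Rightarrow> real" where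
  "pdx j f x = vector_derivative (\<lambda>t. f (x + t *\<^sub>R axis j 1)) (at 0)"

fun iter_pd :: "'n::finite list \<Rightarrow> (real^'n \<Rightarrow> real) \<Rightarrow> real^'n \<Rightarrow> real" where
  "iter_pd [] f = f"
| "iter_pd (j # js) f = pdx j (iter_pd js f)"

definition smooth_open :: "(real^'n) set \<Rightarrow> (real^'n \<Rightarrow> real) \<Rightarrow> bool" where
  "smooth_open U f \<longleftrightarrow> (\<forall>js. continuous_on U (iter_pd js f) \<and>
      (\<forall>j. \<forall>x\<in>U. (\<lambda>t. iter_pd js f (x + t *\<^sub>R axis j 1)) differentiable (at 0)))"

definition smooth_on_set :: "(real^'n) set \<Rightarrow> (real^'n \<Rightarrow> real) \<Rightarrow> bool" where
  "smooth_on_set P f \<longleftrightarrow> (\<exists>U F. open U \<and> P \<subseteq> U \<and> smooth_open U F \<and> (\<forall>x\<in>P. F x = f x))"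

definition grad :: "(real^'n \<Rightarrow> real) \<Rightarrow> real^'n \<Rightarrow> real^'n" where
  "grad f x = (\<chi> j. pdx j f x)"

definition hess :: "(real^'n \<Rightarrow> real) \<Rightarrow> real^'n \<Rightarrow> real^'n^'n" where
  "hess f x = (\<chi> i j. pdx i (pdx j f) x)"

definition pos_def :: "real^'n^'n \<Rightarrow> bool" where
  "pos_def A \<longleftrightarrow> (\<forall>v. v \<noteq> 0 \<longrightarrow> v \<bullet> (A *v v) > 0)"

definition symplectic_potential ::
  "nat \<Rightarrow> (nat \<Rightarrow> int^'n) \<Rightarrow> (nat \<Rightarrow> real) \<Rightarrow> (real^'n \<Rightarrow> real) \<Rightarrow> bool" where
  "symplectic_potential r nu lam g \<longleftrightarrow>
     (\<exists>\<phi> \<alpha>. smooth_on_set (polytope r nu lam) \<phi> \<and> smooth_on_set (polytope r nu lam) \<alpha> \<and>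
        (\<forall>x\<in>polytope r nu lam. \<alpha> x > 0) \<and>
        (\<forall>x\<in>polytope r nu lam.
            g x = 1/2 * (\<Sum>j<r. ell nu lam j x * ln (ell nu lam j x)) + \<phi> x) \<and>
        (\<forall>x\<in>interior (polytope r nu lam). pos_def (hess g x) \<and>
            det (hess g x) = 1 / (\<alpha> x * (\<Prod>j<r. ell nu lam j x))))"

definition strongly_convex_on :: "(real^'n) set \<Rightarrow> (real^'n \<Rightarrow> real) \<Rightarrow> bool" where
  "strongly_convex_on P f \<longleftrightarrow> (\<exists>c>0. convex_on P (\<lambda>x. f x - c / 2 * (norm x)\<^sup>2))"

definition lattice_pts :: "nat \<Rightarrow> (nat \<Rightarrow> int^'n) \<Rightarrow> (nat \<Rightarrow> real) \<Rightarrow> (int^'n) set" where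
  "lattice_pts r nu lam = {m. rv m \<in> polytope r nu lam}"

text \<open>Sections of L over the open dense set (interior P) x T^n, written as
  coefficient functions f(x,theta) with respect to the unitary frame
  1 \<otimes> sqrt(dZ_s) of the potential under consideration (zero outside).
  y = grad g, h = x.y - g,
  sigma^m = w^m e^{-h} 1 \<otimes> sqrt(dZ), w^m = e^{m.(y + i theta)}.\<close>
definition sigma_coeff ::
  "(real^'n) set \<Rightarrow> (real^'n \<Rightarrow> real) \<Rightarrow> int^'n \<Rightarrow> (real^'n) \<times> (real^'n) \<Rightarrow> complex" where
  "sigma_coeff P g m p = (let x = fst p; \<theta> = snd p; y = grad g x; h = x \<bullet> y - g x in
     if x \<in> interior P then
       exp (complex_of_real (rv m \<bullet> y) + \<i> * complex_of_real (rv m \<bullet> \<theta>)) * exp (- complex_of_real h)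
     else 0)"

definition Hquant ::
  "(real^'n) set \<Rightarrow> (int^'n) set \<Rightarrow> (real^'n \<Rightarrow> real) \<Rightarrow> ((real^'n) \<times> (real^'n) \<Rightarrow> complex) set" where
  "Hquant P M g = {f. \<exists>c::int^'n \<Rightarrow> complex. f = (\<lambda>p. \<Sum>m\<in>M. c m * sigma_coeff P g m p)}"

definition pd_theta :: "'n::finite \<Rightarrow> ((real^'n) \<times> (real^'n) \<Rightarrow> complex) \<Rightarrow> (real^'n) \<times> (real^'n) \<Rightarrow> complex" where
  "pd_theta j f p = vector_derivative (\<lambda>t. f (fst p, snd p + t *\<^sub>R axis j 1)) (at 0)"

definition ham_vf :: "(real^'n \<Rightarrow> real) \<Rightarrow> ((real^'n) \<times> (real^'n) \<Rightarrow> complex) \<Rightarrow> (real^'n) \<times> (real^'n) \<Rightarrow> complex" where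
  "ham_vf \<psi> f p = - (\<Sum>j\<in>UNIV. complex_of_real (pdx j \<psi> (fst p)) * pd_theta j f p)"

definition preq_op ::
  "(real^'n) set \<Rightarrow> (real^'n \<Rightarrow> real) \<Rightarrow> ((real^'n) \<times> (real^'n) \<Rightarrow> complex) \<Rightarrow> (real^'n) \<times> (real^'n) \<Rightarrow> complex" where
  "preq_op P \<psi> f p = (if fst p \<in> interior P then
      \<i> * ham_vf \<psi> f p + complex_of_real (\<psi> (fst p) - fst p \<bullet> grad \<psi> (fst p)) * f p
    else 0)"

definition preq_series_term ::
  "(real^'n) set \<Rightarrow> (real^'n \<Rightarrow> real) \<Rightarrow> real \<Rightarrow> ((real^'n) \<times> (real^'n) \<Rightarrow> complex) \<Rightarrow> (real^'n) \<times> (real^'n) \<Rightarrow> nat \<Rightarrow> complex" where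
  "preq_series_term P \<psi> s f p k = complex_of_real (s ^ k / fact k) * ((preq_op P \<psi> ^^ k) f p)"

text \<open>e^{s psi-hat} (tensor e^{is L_X_psi}, which sends the frame sqrt(dZ) to sqrt(dZ_s)),
  acting on coefficient functions.\<close>
definition exp_preq ::
  "(real^'n) set \<Rightarrow> (real^'n \<Rightarrow> real) \<Rightarrow> real \<Rightarrow> ((real^'n) \<times> (real^'n) \<Rightarrow> complex) \<Rightarrow> (real^'n) \<times> (real^'n) \<Rightarrow> complex" where
  "exp_preq P \<psi> s f p = suminf (preq_series_term P \<psi> s f p)"

end

theory Submission
  imports Defs
begin

text \<open>Over the interior of P the monomial section \<sigma>^m depends on the angles only through
  e^(i m\<cdot>\<theta>), so X_\<psi> acts on it as multiplication by -i m\<cdot>\<nabla>\<psi>, and \<sigma>^m is an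
  eigensection of the prequantum operator with eigenvalue the function
  \<kappa>_m = m\<cdot>\<nabla>\<psi> + \<psi> - x\<cdot>\<nabla>\<psi>. Hence the exponential series sends \<sigma>^m_g to e^(s \<kappa>_m) \<sigma>^m_g,
  which is \<sigma>^m for the potential g + s\<psi> because \<nabla>(g + s\<psi>) = \<nabla>g + s \<nabla>\<psi>. So the operator
  maps the spanning family of H_g onto that of H_(g+s\<psi>); it is injective because over a single
  interior point the monomials restrict to distinct characters \<theta> \<mapsto> e^(i m\<cdot>\<theta>), which are
  linearly independent.\<close>

section \<open>Linear independence of characters\<close>

lemma trig_sum_zero_imp_coeffs_zero_real:
  fixes a :: "'b \<Rightarrow> real" and d :: "'b \<Rightarrow> complex"
  assumes "finite A" "inj_on a A"
    and "\<And>t. (\<Sum>m\<in>A. d m * exp (\<i> * complex_of_real (a m * t))) = 0"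
  shows "\<forall>m\<in>A. d m = 0"
  using assms
proof (induction A arbitrary: a d rule: finite_induct)
  case empty then show ?case by simp
next
  case (insert m0 A)
  define b where "b m = a m - a m0" for m
  have b_inj: "inj_on b A" using insert.prems(1) unfolding b_def inj_on_def by auto
  have b_nonzero: "b m \<noteq> 0" if "m \<in> A" for m
    using insert.prems(1) insert.hyps(2) that unfolding b_def inj_on_def by force
  define G where "G z = (\<Sum>m\<in>A. d m * exp (\<i> * z * complex_of_real (b m)))" for z
  text \<open>Dividing by the character of \<open>m0\<close> makes the remaining sum constant; differentiating
    kills \<open>d m0\<close> and multiplies the other coefficients by the nonzero \<open>\<i> b m\<close>.\<close>
  have G_const: "G (complex_of_real t) = - d m0" for t
  proof -
    have "exp (- \<i> * complex_of_real (a m0 * t)) *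
        (\<Sum>m\<in>insert m0 A. d m * exp (\<i> * complex_of_real (a m * t))) = d m0 + G (complex_of_real t)"
      using insert.hyps unfolding G_def b_def
      by (simp add: sum_distrib_left algebra_simps flip: exp_add)
    then show ?thesis using insert.prems(2) by (simp add: eq_neg_iff_add_eq_0 add.commute)
  qed
  have G_deriv: "(G has_field_derivative
      (\<Sum>m\<in>A. d m * (\<i> * complex_of_real (b m)) * exp (\<i> * z * complex_of_real (b m)))) (at z)" for z
    unfolding G_def by (auto intro!: derivative_eq_intros simp: algebra_simps)
  have G'_zero: "(\<Sum>m\<in>A. d m * (\<i> * complex_of_real (b m)) * exp (\<i> * complex_of_real (b m * t))) = 0" for t
  proof -
    have "((\<lambda>t. G (complex_of_real t)) has_vector_derivative (\<Sum>m\<in>A. d m * (\<i> * complex_of_real (b m))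
        * exp (\<i> * complex_of_real t * complex_of_real (b m)))) (at t)"
      by (rule has_vector_derivative_real_field[OF G_deriv])
    moreover have "((\<lambda>t. G (complex_of_real t)) has_vector_derivative 0) (at t)"
      unfolding G_const by (rule has_vector_derivative_const)
    ultimately show ?thesis by (auto dest: vector_derivative_unique_at simp: mult_ac)
  qed
  from insert.IH[OF b_inj G'_zero] b_nonzero have A_zero: "\<forall>m\<in>A. d m = 0" by auto
  then have "G 0 = 0" unfolding G_def by simp
  then show ?case using G_const[of 0] A_zero by simp
qed

lemma ex_inner_nonzero_finite:
  fixes S :: "'a::real_inner set"
  assumes "finite S" "0 \<notin> S"
  shows "\<exists>v. \<forall>u\<in>S. u \<bullet> v \<noteq> 0"
  using assms
proof (induction S rule: finite_induct)
  case empty then show ?case by simp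
next
  case (insert u S)
  then obtain v where v: "\<forall>w\<in>S. w \<bullet> v \<noteq> 0" by auto
  text \<open>Perturb \<open>v\<close> to \<open>v + e u\<close>, with \<open>e\<close> avoiding the finitely many values that
    would make one of the inner products vanish.\<close>
  define B where "B = insert 0 ((\<lambda>w. - (w \<bullet> v) / (w \<bullet> u)) ` S)"
  have "finite B" using insert.hyps unfolding B_def by simp
  then obtain e :: real where e: "e \<notin> B"
    using ex_new_if_finite[OF infinite_UNIV_char_0] by blast
  show ?case
  proof (cases "u \<bullet> v = 0")
    case False then show ?thesis using v by auto
  next
    case True
    have "u \<noteq> 0" using insert.prems by auto
    then have "u \<bullet> (v + e *\<^sub>R u) \<noteq> 0" using True e unfolding B_def
      by (simp add: inner_add_right)
    moreover have "w \<bullet> (v + e *\<^sub>R u) \<noteq> 0" if "w \<in> S" for w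
    proof (cases "w \<bullet> u = 0")
      case True then show ?thesis using v that by (simp add: inner_add_right)
    next
      case False
      have "e \<noteq> - (w \<bullet> v) / (w \<bullet> u)" using e that unfolding B_def by auto
      then have "w \<bullet> v + e * (w \<bullet> u) \<noteq> 0" using False by (auto simp: field_simps)
      then show ?thesis by (simp add: inner_add_right)
    qed
    ultimately show ?thesis by blast
  qed
qed

lemma trig_sum_zero_imp_coeffs_zero:
  fixes a :: "'b \<Rightarrow> 'a::real_inner" and d :: "'b \<Rightarrow> complex"
  assumes "finite A" "inj_on a A"
    and "\<And>t. (\<Sum>m\<in>A. d m * exp (\<i> * complex_of_real (a m \<bullet> t))) = 0"
  shows "\<forall>m\<in>A. d m = 0"
proof -
  define S where "S = (\<lambda>(m, m'). a m - a m') ` (A \<times> A - Id)"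
  have "finite S" unfolding S_def using assms(1) by simp
  moreover have "0 \<notin> S"
    unfolding S_def using assms(2) by (force simp: inj_on_def)
  ultimately obtain v where v: "\<forall>u\<in>S. u \<bullet> v \<noteq> 0" using ex_inner_nonzero_finite by blast
  have "inj_on (\<lambda>m. a m \<bullet> v) A"
  proof (rule inj_onI, rule ccontr)
    fix m m' assume "m \<in> A" "m' \<in> A" "a m \<bullet> v = a m' \<bullet> v" "m \<noteq> m'"
    then have "a m - a m' \<in> S" "(a m - a m') \<bullet> v = 0"
      unfolding S_def by (auto simp: inner_diff_left)
    then show False using v by blast
  qed
  moreover have "(\<Sum>m\<in>A. d m * exp (\<i> * complex_of_real ((a m \<bullet> v) * t))) = 0" for t
    using assms(3)[of "t *\<^sub>R v"] by (simp add: mult.commute)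
  ultimately show ?thesis by (rule trig_sum_zero_imp_coeffs_zero_real[OF assms(1)])
qed

section \<open>Gradients of potentials\<close>

lemma line_differentiable_cong_interior:
  fixes x :: "real^'n"
  assumes x: "x \<in> interior P" and eq: "\<And>y. y \<in> P \<Longrightarrow> f y = F y"
    and F_diff: "(\<lambda>t. F (x + t *\<^sub>R axis j 1)) differentiable (at 0)"
  shows "(\<lambda>t. f (x + t *\<^sub>R axis j 1)) differentiable (at 0)"
proof -
  obtain D where D: "((\<lambda>t. F (x + t *\<^sub>R axis j 1)) has_derivative D) (at 0)"
    using F_diff unfolding differentiable_def by blast
  have "continuous_on UNIV (\<lambda>t::real. x + t *\<^sub>R axis j 1)" by (intro continuous_intros)
  then have "open {t::real. x + t *\<^sub>R axis j 1 \<in> interior P}"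
    using open_vimage[OF open_interior] by (simp add: vimage_def)
  then have "((\<lambda>t. f (x + t *\<^sub>R axis j 1)) has_derivative D) (at 0)"
  proof (rule has_derivative_transform_within_open[OF D])
    show "0 \<in> {t::real. x + t *\<^sub>R axis j 1 \<in> interior P}" using x by simp
  next
    fix t assume "t \<in> {t::real. x + t *\<^sub>R axis j 1 \<in> interior P}"
    then show "F (x + t *\<^sub>R axis j 1) = f (x + t *\<^sub>R axis j 1)"
      using eq interior_subset by (metis mem_Collect_eq subsetD)
  qed
  then show ?thesis unfolding differentiable_def by blast
qed

lemma smooth_on_set_line_differentiable:
  fixes x :: "real^'n"
  assumes "smooth_on_set P f" "x \<in> interior P"
  shows "(\<lambda>t. f (x + t *\<^sub>R axis j 1)) differentiable (at 0)"
proof -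
  obtain U F where U: "P \<subseteq> U" "smooth_open U F" "\<forall>x\<in>P. F x = f x"
    using assms(1) unfolding smooth_on_set_def by blast
  have "x \<in> U" using assms(2) U(1) interior_subset by blast
  then have "(\<lambda>t. F (x + t *\<^sub>R axis j 1)) differentiable (at 0)"
    using U(2) unfolding smooth_open_def by (metis iter_pd.simps(1))
  then show ?thesis
    by (rule line_differentiable_cong_interior[OF assms(2), rotated]) (use U(3) in auto)
qed

lemma ell_pos_interior:
  assumes delz: "delzant r nu lam" and x: "x \<in> interior (polytope r nu lam)" and j: "j < r"
  shows "ell nu lam j x > 0"
proof (rule ccontr)
  assume not_pos: "\<not> ell nu lam j x > 0"
  have "x \<in> polytope r nu lam" using x interior_subset by blast
  then have "ell nu lam j x \<ge> 0" using j unfolding polytope_def by auto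
  with not_pos have zero: "ell nu lam j x = 0" by linarith
  define v where "v = rv (nu j)"
  obtain e where e: "e > 0" "ball x e \<subseteq> polytope r nu lam"
    using x by (meson mem_interior)
  show False
  proof (cases "v = 0")
    case True
    text \<open>A zero normal is excluded by the half-integrality of the constants.\<close>
    obtain k :: int where "lam j = real_of_int k + 1/2" using delz j unfolding delzant_def by blast
    moreover have "lam j = 0" using zero True unfolding ell_def v_def by simp
    ultimately have "2 * k = -1" by linarith
    then show False by presburger
  next
    case False
    define y where "y = x - (e / 2 / norm v) *\<^sub>R v"
    have "dist x y = e / 2" unfolding y_def dist_norm using False e by simp
    then have "y \<in> polytope r nu lam" using e by auto
    then have "ell nu lam j y \<ge> 0" using j unfolding polytope_def by auto
    moreover have "ell nu lam j y = ell nu lam j x - (e / 2 / norm v) * (v \<bullet> v)"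
      unfolding ell_def y_def v_def by (simp add: inner_diff_right algebra_simps)
    moreover have "(e / 2 / norm v) * (v \<bullet> v) > 0" using False e by simp
    ultimately show False using zero by linarith
  qed
qed

lemma symplectic_potential_line_differentiable:
  fixes x :: "real^'n"
  assumes delz: "delzant r nu lam" and pot: "symplectic_potential r nu lam g"
    and x: "x \<in> interior (polytope r nu lam)"
  shows "(\<lambda>t. g (x + t *\<^sub>R axis j 1)) differentiable (at 0)"
proof -
  obtain \<phi> where \<phi>: "smooth_on_set (polytope r nu lam) \<phi>"
    and g_eq: "\<forall>x\<in>polytope r nu lam. g x = 1/2 * (\<Sum>i<r. ell nu lam i x * ln (ell nu lam i x)) + \<phi> x"
    using pot unfolding symplectic_potential_def by blast
  have ell_line: "ell nu lam i (x + t *\<^sub>R axis j 1) = ell nu lam i x + t * (rv (nu i) $ j)" for i t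
    unfolding ell_def by (simp add: inner_add_right cart_eq_inner_axis algebra_simps)
  have "\<And>i. i \<in> {..<r} \<Longrightarrow> ell nu lam i x > 0" using ell_pos_interior[OF delz x] by auto
  then have "\<exists>D. ((\<lambda>t. \<Sum>i<r. (ell nu lam i x + t * (rv (nu i) $ j)) * ln (ell nu lam i x + t * (rv (nu i) $ j)))
      has_real_derivative D) (at 0)"
    by (intro exI) (rule derivative_eq_intros refl | simp)+
  then have "(\<lambda>t. \<Sum>i<r. ell nu lam i (x + t *\<^sub>R axis j 1) * ln (ell nu lam i (x + t *\<^sub>R axis j 1)))
      differentiable (at 0)"
    unfolding ell_line using has_field_derivative_imp_has_derivative differentiableI by blast
  then have "(\<lambda>t. 1/2 * (\<Sum>i<r. ell nu lam i (x + t *\<^sub>R axis j 1) * ln (ell nu lam i (x + t *\<^sub>R axis j 1)))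
      + \<phi> (x + t *\<^sub>R axis j 1)) differentiable (at 0)"
    by (intro differentiable_add differentiable_mult differentiable_const
        smooth_on_set_line_differentiable[OF \<phi> x])
  then show ?thesis
    by (rule line_differentiable_cong_interior[OF x, rotated]) (use g_eq in auto)
qed

lemma grad_add_scaled:
  assumes "\<And>j. (\<lambda>t. g (x + t *\<^sub>R axis j 1)) differentiable (at 0)"
    and "\<And>j. (\<lambda>t. \<psi> (x + t *\<^sub>R axis j 1)) differentiable (at 0)"
  shows "grad (\<lambda>x. g x + s * \<psi> x) x = grad g x + s *\<^sub>R grad \<psi> x"
proof -
  have "pdx j (\<lambda>x. g x + s * \<psi> x) x = pdx j g x + s * pdx j \<psi> x" for j
  proof -
    have "((\<lambda>t. g (x + t *\<^sub>R axis j 1)) has_vector_derivative pdx j g x) (at 0)"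
      "((\<lambda>t. \<psi> (x + t *\<^sub>R axis j 1)) has_vector_derivative pdx j \<psi> x) (at 0)"
      unfolding pdx_def using assms vector_derivative_works by blast+
    then have "((\<lambda>t. g (x + t *\<^sub>R axis j 1) + s * \<psi> (x + t *\<^sub>R axis j 1)) has_vector_derivative
       pdx j g x + s * pdx j \<psi> x) (at 0)"
      by (auto intro!: derivative_eq_intros)
    then show ?thesis unfolding pdx_def[of j "\<lambda>x. g x + s * \<psi> x"] by (simp add: vector_derivative_at)
  qed
  then show ?thesis unfolding grad_def by (simp add: vec_eq_iff)
qed

lemma grad_potential_add:
  assumes "delzant r nu lam" "symplectic_potential r nu lam g"
    and "smooth_on_set (polytope r nu lam) \<psi>" "x \<in> interior (polytope r nu lam)"
  shows "grad (\<lambda>x. g x + s * \<psi> x) x = grad g x + s *\<^sub>R grad \<psi> x"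
  using assms by (intro grad_add_scaled symplectic_potential_line_differentiable
      smooth_on_set_line_differentiable)

section \<open>The prequantum operator on monomial sections\<close>

definition preq_eigenvalue :: "(real^'n \<Rightarrow> real) \<Rightarrow> int^'n \<Rightarrow> real^'n \<Rightarrow> real" where
  "preq_eigenvalue \<psi> m x = rv m \<bullet> grad \<psi> x + \<psi> x - x \<bullet> grad \<psi> x"

lemma sigma_coeff_theta_shift:
  assumes "x \<in> interior P"
  shows "sigma_coeff P g m (x, \<theta> + t *\<^sub>R axis j 1)
       = sigma_coeff P g m (x, \<theta>) * exp (\<i> * complex_of_real (t * (rv m $ j)))"
proof -
  have "rv m \<bullet> (\<theta> + t *\<^sub>R axis j 1) = rv m \<bullet> \<theta> + t * (rv m $ j)"
    by (simp add: inner_add_right cart_eq_inner_axis)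
  with assms show ?thesis unfolding sigma_coeff_def Let_def
    by (simp add: algebra_simps inner_axis flip: exp_add)
qed

lemma pd_theta_sigma_sum:
  assumes "finite A" "fst p \<in> interior P"
  shows "pd_theta j (\<lambda>q. \<Sum>m\<in>A. d m (fst q) * sigma_coeff P g m q) p
       = (\<Sum>m\<in>A. d m (fst p) * sigma_coeff P g m p * (\<i> * complex_of_real (rv m $ j)))"
proof -
  define G where "G z = (\<Sum>m\<in>A. d m (fst p) * sigma_coeff P g m p * exp (\<i> * z * complex_of_real (rv m $ j)))" for z
  have line: "(\<lambda>t. \<Sum>m\<in>A. d m (fst p) * sigma_coeff P g m (fst p, snd p + t *\<^sub>R axis j 1))
       = (\<lambda>t. G (complex_of_real t))"
    unfolding G_def using assms(2)
    by (intro ext sum.cong refl) (simp add: sigma_coeff_theta_shift mult_ac)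
  have "(G has_field_derivative (\<Sum>m\<in>A. d m (fst p) * sigma_coeff P g m p *
      (exp (\<i> * z * complex_of_real (rv m $ j)) * (\<i> * complex_of_real (rv m $ j))))) (at z)" for z
    unfolding G_def by (auto intro!: derivative_eq_intros simp: algebra_simps)
  from has_vector_derivative_real_field[OF this]
  have "((\<lambda>t. G (complex_of_real t)) has_vector_derivative (\<Sum>m\<in>A. d m (fst p) * sigma_coeff P g m p *
      (exp (\<i> * complex_of_real 0 * complex_of_real (rv m $ j)) * (\<i> * complex_of_real (rv m $ j))))) (at 0)" .
  then show ?thesis unfolding pd_theta_def using line by (simp add: vector_derivative_at)
qed

lemma preq_op_sigma_sum:
  assumes "finite A"
  shows "preq_op P \<psi> (\<lambda>q. \<Sum>m\<in>A. d m (fst q) * sigma_coeff P g m q)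
       = (\<lambda>q. \<Sum>m\<in>A. d m (fst q) * complex_of_real (preq_eigenvalue \<psi> m (fst q)) * sigma_coeff P g m q)"
proof
  fix q
  show "preq_op P \<psi> (\<lambda>q. \<Sum>m\<in>A. d m (fst q) * sigma_coeff P g m q) q
       = (\<Sum>m\<in>A. d m (fst q) * complex_of_real (preq_eigenvalue \<psi> m (fst q)) * sigma_coeff P g m q)"
  proof (cases "fst q \<in> interior P")
    case False
    then show ?thesis unfolding preq_op_def sigma_coeff_def Let_def by simp
  next
    case True
    have "ham_vf \<psi> (\<lambda>q. \<Sum>m\<in>A. d m (fst q) * sigma_coeff P g m q) q
        = - (\<Sum>j\<in>UNIV. complex_of_real (pdx j \<psi> (fst q)) *
              (\<Sum>m\<in>A. d m (fst q) * sigma_coeff P g m q * (\<i> * complex_of_real (rv m $ j))))"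
      unfolding ham_vf_def using pd_theta_sigma_sum[OF assms True] by simp
    also have "\<dots> = - \<i> * (\<Sum>m\<in>A. d m (fst q) * sigma_coeff P g m q *
              (\<Sum>j\<in>UNIV. complex_of_real (pdx j \<psi> (fst q) * rv m $ j)))"
      by (simp add: sum_distrib_left sum_distrib_right mult_ac sum_negf flip: sum.swap[of _ A UNIV])
    also have "(\<lambda>m. \<Sum>j\<in>UNIV. complex_of_real (pdx j \<psi> (fst q) * rv m $ j))
       = (\<lambda>m. complex_of_real (rv m \<bullet> grad \<psi> (fst q)))"
      by (auto simp: inner_vec_def grad_def mult.commute)
    finally have ham: "ham_vf \<psi> (\<lambda>q. \<Sum>m\<in>A. d m (fst q) * sigma_coeff P g m q) q
        = - \<i> * (\<Sum>m\<in>A. d m (fst q) * sigma_coeff P g m q * complex_of_real (rv m \<bullet> grad \<psi> (fst q)))" .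
    show ?thesis
      using True unfolding preq_op_def ham preq_eigenvalue_def
      by (simp add: sum_distrib_left sum.distrib flip: sum.distrib) (simp add: algebra_simps)
  qed
qed

lemma preq_op_power_sigma_sum:
  assumes "finite A"
  shows "(preq_op P \<psi> ^^ k) (\<lambda>q. \<Sum>m\<in>A. c m * sigma_coeff P g m q)
       = (\<lambda>q. \<Sum>m\<in>A. c m * complex_of_real (preq_eigenvalue \<psi> m (fst q)) ^ k * sigma_coeff P g m q)"
proof (induction k)
  case 0 then show ?case by simp
next
  case (Suc k)
  then show ?case
    using preq_op_sigma_sum[OF assms, where d = "\<lambda>m x. c m * complex_of_real (preq_eigenvalue \<psi> m x) ^ k"]
    by (simp add: mult_ac)
qed

lemma preq_series_sigma_sum_sums:
  assumes "finite A"
  shows "preq_series_term P \<psi> s (\<lambda>q. \<Sum>m\<in>A. c m * sigma_coeff P g m q) p sums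
     (\<Sum>m\<in>A. c m * exp (complex_of_real (s * preq_eigenvalue \<psi> m (fst p))) * sigma_coeff P g m p)"
proof -
  have "preq_series_term P \<psi> s (\<lambda>q. \<Sum>m\<in>A. c m * sigma_coeff P g m q) p
     = (\<lambda>k. \<Sum>m\<in>A. (c m * sigma_coeff P g m p) *
          (complex_of_real (s * preq_eigenvalue \<psi> m (fst p)) ^ k /\<^sub>R fact k))"
    unfolding preq_series_term_def preq_op_power_sigma_sum[OF assms]
    by (simp add: sum_distrib_left scaleR_conv_of_real power_mult_distrib mult_ac divide_inverse)
  moreover have "(\<lambda>k. (c m * sigma_coeff P g m p) *
      (complex_of_real (s * preq_eigenvalue \<psi> m (fst p)) ^ k /\<^sub>R fact k)) sums
      (c m * exp (complex_of_real (s * preq_eigenvalue \<psi> m (fst p))) * sigma_coeff P g m p)" for m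
    using sums_mult[OF exp_converges[of "complex_of_real (s * preq_eigenvalue \<psi> m (fst p))"],
        of "c m * sigma_coeff P g m p"]
    by (simp add: mult_ac)
  ultimately show ?thesis by (simp add: sums_sum)
qed

lemma exp_preq_sigma_sum_eigen:
  "(\<forall>p. summable (preq_series_term P \<psi> s (\<lambda>q. \<Sum>m\<in>A. c m * sigma_coeff P g m q) p)) \<and>
   exp_preq P \<psi> s (\<lambda>q. \<Sum>m\<in>A. c m * sigma_coeff P g m q)
     = (\<lambda>p. \<Sum>m\<in>A. c m * exp (complex_of_real (s * preq_eigenvalue \<psi> m (fst p))) * sigma_coeff P g m p)"
proof (cases "finite A")
  case True
  then show ?thesis
    unfolding exp_preq_def using preq_series_sigma_sum_sums[OF True] by (auto simp: sums_iff)
next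
  case False
  text \<open>An infinite index set makes both sides the (zero) sum over \<open>{}\<close>.\<close>
  then show ?thesis
    using preq_series_sigma_sum_sums[OF finite.emptyI, of P \<psi> s c g]
    unfolding exp_preq_def sum.infinite[OF False] by (auto simp: sums_iff)
qed

lemma sigma_coeff_potential_shift:
  assumes "fst p \<in> interior P \<Longrightarrow> grad (\<lambda>x. g x + s * \<psi> x) (fst p) = grad g (fst p) + s *\<^sub>R grad \<psi> (fst p)"
  shows "exp (complex_of_real (s * preq_eigenvalue \<psi> m (fst p))) * sigma_coeff P g m p
       = sigma_coeff P (\<lambda>x. g x + s * \<psi> x) m p"
  using assms unfolding sigma_coeff_def Let_def preq_eigenvalue_def
  by (simp add: inner_add_right algebra_simps flip: exp_add exp_diff)

section \<open>The quantizations\<close>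

lemma rv_inj: "inj_on rv A"
  by (rule inj_onI) (simp add: rv_def vec_eq_iff)

lemma sigma_coeff_fibre:
  assumes "x \<in> interior P"
  shows "sigma_coeff P g m (x, \<theta>) = (exp (complex_of_real (rv m \<bullet> grad g x))
     * exp (- complex_of_real (x \<bullet> grad g x - g x))) * exp (\<i> * complex_of_real (rv m \<bullet> \<theta>))"
  using assms unfolding sigma_coeff_def Let_def by (simp add: mult_ac add_ac flip: exp_add)

lemma sigma_sum_eq_imp_coeffs_eq:
  assumes x: "x \<in> interior P" and "finite A"
    and eq: "(\<lambda>p. \<Sum>m\<in>A. c m * sigma_coeff P g m p) = (\<lambda>p. \<Sum>m\<in>A. c' m * sigma_coeff P g m p)"
  shows "\<forall>m\<in>A. c m = c' m"
proof -
  define E where "E m = exp (complex_of_real (rv m \<bullet> grad g x)) * exp (- complex_of_real (x \<bullet> grad g x - g x))" for m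
  have "(\<Sum>m\<in>A. ((c m - c' m) * E m) * exp (\<i> * complex_of_real (rv m \<bullet> \<theta>))) = 0" for \<theta>
  proof -
    have "(\<Sum>m\<in>A. ((c m - c' m) * E m) * exp (\<i> * complex_of_real (rv m \<bullet> \<theta>)))
        = (\<Sum>m\<in>A. c m * sigma_coeff P g m (x, \<theta>) - c' m * sigma_coeff P g m (x, \<theta>))"
      by (rule sum.cong[OF refl]) (simp only: sigma_coeff_fibre[OF x] E_def ring_distribs mult.assoc)
    also have "\<dots> = 0" using fun_cong[OF eq, of "(x, \<theta>)"] by (simp add: sum_subtractf)
    finally show ?thesis .
  qed
  then have "\<forall>m\<in>A. (c m - c' m) * E m = 0"
    by (rule trig_sum_zero_imp_coeffs_zero[OF \<open>finite A\<close> rv_inj])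
  moreover have "E m \<noteq> 0" for m unfolding E_def by simp
  ultimately show ?thesis by simp
qed

context
  fixes P :: "(real^'n) set" and M :: "(int^'n) set" and g \<psi> :: "real^'n \<Rightarrow> real" and s :: real
  assumes grad_add: "\<forall>x\<in>interior P. grad (\<lambda>x. g x + s * \<psi> x) x = grad g x + s *\<^sub>R grad \<psi> x"
begin

lemma exp_preq_sigma_sum:
  "(\<forall>p. summable (preq_series_term P \<psi> s (\<lambda>q. \<Sum>m\<in>A. c m * sigma_coeff P g m q) p)) \<and>
   exp_preq P \<psi> s (\<lambda>q. \<Sum>m\<in>A. c m * sigma_coeff P g m q)
     = (\<lambda>q. \<Sum>m\<in>A. c m * sigma_coeff P (\<lambda>x. g x + s * \<psi> x) m q)"
proof -
  have shift: "c m * exp (complex_of_real (s * preq_eigenvalue \<psi> m (fst p))) * sigma_coeff P g m p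
      = c m * sigma_coeff P (\<lambda>x. g x + s * \<psi> x) m p" for m p
    by (simp only: mult.assoc sigma_coeff_potential_shift[OF grad_add[rule_format]])
  show ?thesis using exp_preq_sigma_sum_eigen[where P=P and \<psi>=\<psi> and s=s and g=g and A=A and c=c]
    unfolding shift .
qed

lemma summable_preq_series_Hquant:
  "f \<in> Hquant P M g \<Longrightarrow> summable (preq_series_term P \<psi> s f p)"
  unfolding Hquant_def using exp_preq_sigma_sum by blast

lemma exp_preq_Hquant:
  "f \<in> Hquant P M g \<Longrightarrow> \<exists>c. f = (\<lambda>p. \<Sum>m\<in>M. c m * sigma_coeff P g m p)
     \<and> exp_preq P \<psi> s f = (\<lambda>p. \<Sum>m\<in>M. c m * sigma_coeff P (\<lambda>x. g x + s * \<psi> x) m p)"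
  unfolding Hquant_def using exp_preq_sigma_sum by blast

lemma exp_preq_Hquant_linear:
  assumes "f \<in> Hquant P M g" "f' \<in> Hquant P M g"
  shows "exp_preq P \<psi> s (\<lambda>p. a * f p + b * f' p) = (\<lambda>p. a * exp_preq P \<psi> s f p + b * exp_preq P \<psi> s f' p)"
proof -
  obtain c where c: "f = (\<lambda>p. \<Sum>m\<in>M. c m * sigma_coeff P g m p)"
      "exp_preq P \<psi> s f = (\<lambda>p. \<Sum>m\<in>M. c m * sigma_coeff P (\<lambda>x. g x + s * \<psi> x) m p)"
    using exp_preq_Hquant[OF assms(1)] by blast
  obtain c' where c': "f' = (\<lambda>p. \<Sum>m\<in>M. c' m * sigma_coeff P g m p)"
      "exp_preq P \<psi> s f' = (\<lambda>p. \<Sum>m\<in>M. c' m * sigma_coeff P (\<lambda>x. g x + s * \<psi> x) m p)"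
    using exp_preq_Hquant[OF assms(2)] by blast
  have "(\<lambda>p. a * f p + b * f' p) = (\<lambda>p. \<Sum>m\<in>M. (a * c m + b * c' m) * sigma_coeff P g m p)"
    unfolding c c' by (simp add: sum_distrib_left sum.distrib algebra_simps)
  then have "exp_preq P \<psi> s (\<lambda>p. a * f p + b * f' p)
      = (\<lambda>p. \<Sum>m\<in>M. (a * c m + b * c' m) * sigma_coeff P (\<lambda>x. g x + s * \<psi> x) m p)"
    using exp_preq_sigma_sum by simp
  then show ?thesis unfolding c(2) c'(2) by (simp add: sum_distrib_left sum.distrib algebra_simps)
qed

lemma exp_preq_image_Hquant:
  "exp_preq P \<psi> s ` Hquant P M g = Hquant P M (\<lambda>x. g x + s * \<psi> x)"
proof
  show "exp_preq P \<psi> s ` Hquant P M g \<subseteq> Hquant P M (\<lambda>x. g x + s * \<psi> x)"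
    using exp_preq_Hquant unfolding Hquant_def by blast
  show "Hquant P M (\<lambda>x. g x + s * \<psi> x) \<subseteq> exp_preq P \<psi> s ` Hquant P M g"
  proof
    fix h assume "h \<in> Hquant P M (\<lambda>x. g x + s * \<psi> x)"
    then obtain c where "h = (\<lambda>p. \<Sum>m\<in>M. c m * sigma_coeff P (\<lambda>x. g x + s * \<psi> x) m p)"
      unfolding Hquant_def by blast
    then have "h = exp_preq P \<psi> s (\<lambda>p. \<Sum>m\<in>M. c m * sigma_coeff P g m p)"
      using exp_preq_sigma_sum by simp
    moreover have "(\<lambda>p. \<Sum>m\<in>M. c m * sigma_coeff P g m p) \<in> Hquant P M g"
      unfolding Hquant_def by blast
    ultimately show "h \<in> exp_preq P \<psi> s ` Hquant P M g" by blast
  qed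
qed

lemma inj_on_exp_preq_Hquant:
  assumes "interior P \<noteq> {}"
  shows "inj_on (exp_preq P \<psi> s) (Hquant P M g)"
proof (rule inj_onI)
  fix f f' assume f: "f \<in> Hquant P M g" and f': "f' \<in> Hquant P M g"
    and eq: "exp_preq P \<psi> s f = exp_preq P \<psi> s f'"
  obtain c where c: "f = (\<lambda>p. \<Sum>m\<in>M. c m * sigma_coeff P g m p)"
      "exp_preq P \<psi> s f = (\<lambda>p. \<Sum>m\<in>M. c m * sigma_coeff P (\<lambda>x. g x + s * \<psi> x) m p)"
    using exp_preq_Hquant[OF f] by blast
  obtain c' where c': "f' = (\<lambda>p. \<Sum>m\<in>M. c' m * sigma_coeff P g m p)"
      "exp_preq P \<psi> s f' = (\<lambda>p. \<Sum>m\<in>M. c' m * sigma_coeff P (\<lambda>x. g x + s * \<psi> x) m p)"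
    using exp_preq_Hquant[OF f'] by blast
  show "f = f'"
  proof (cases "finite M")
    case True
    obtain x where "x \<in> interior P" using assms by blast
    from sigma_sum_eq_imp_coeffs_eq[OF this True] eq
    have "\<forall>m\<in>M. c m = c' m" unfolding c(2) c'(2) by blast
    then show ?thesis unfolding c(1) c'(1) by simp
  qed (simp add: c c')
qed

lemma exp_preq_sigma_coeff:
  "exp_preq P \<psi> s (sigma_coeff P g m) = sigma_coeff P (\<lambda>x. g x + s * \<psi> x) m"
  using exp_preq_sigma_sum[where A="{m}" and c="\<lambda>_. 1"] by simp

end

theorem mainTheorem5:
  fixes r :: nat and nu :: "nat \<Rightarrow> int^'n" and lam :: "nat \<Rightarrow> real"
    and g \<psi> :: "real^'n \<Rightarrow> real"
  defines "P \<equiv> polytope r nu lam"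
  defines "M \<equiv> lattice_pts r nu lam"
  assumes delz: "delzant r nu lam"
    and g_pot: "symplectic_potential r nu lam g"
    and psi_smooth: "smooth_on_set P \<psi>"
    and psi_sc: "strongly_convex_on P \<psi>"
    and gs_pot: "\<And>s. s > 0 \<Longrightarrow> symplectic_potential r nu lam (\<lambda>x. g x + s * \<psi> x)"
    and s_pos: "s > 0"
  shows "(\<forall>f\<in>Hquant P M g. \<forall>p. summable (preq_series_term P \<psi> s f p))
       \<and> (\<forall>f\<in>Hquant P M g. \<forall>f'\<in>Hquant P M g. \<forall>a b::complex.
            exp_preq P \<psi> s (\<lambda>p. a * f p + b * f' p)
              = (\<lambda>p. a * exp_preq P \<psi> s f p + b * exp_preq P \<psi> s f' p))
       \<and> bij_betw (exp_preq P \<psi> s) (Hquant P M g) (Hquant P M (\<lambda>x. g x + s * \<psi> x))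
       \<and> (\<forall>m\<in>M. exp_preq P \<psi> s (sigma_coeff P g m) = sigma_coeff P (\<lambda>x. g x + s * \<psi> x) m)"
proof -
  have grad_add: "\<forall>x\<in>interior P. grad (\<lambda>x. g x + s * \<psi> x) x = grad g x + s *\<^sub>R grad \<psi> x"
    using grad_potential_add[OF delz g_pot] psi_smooth unfolding P_def by blast
  have "interior P \<noteq> {}" using delz unfolding delzant_def P_def by blast
  then show ?thesis unfolding bij_betw_def
    by (simp add: summable_preq_series_Hquant[OF grad_add] exp_preq_Hquant_linear[OF grad_add]
        inj_on_exp_preq_Hquant[OF grad_add] exp_preq_image_Hquant[OF grad_add]
        exp_preq_sigma_coeff[OF grad_add])
qed

end
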